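(* Let $R$, $D$ and $Proj:D\to P^{\neq}(\omega_2)$ be as defined in the context. Then: (1) if $r_0\ge r_1$ are both in $D$, then $Proj(r_0)\ge Proj(r_1)$ in $P^{\neq}(\omega_2)$; (2) if $r_0\in D$, $p_0=Proj(r_0)$ and $p_1\le p_0$ in $P^{\neq}(\omega_2)$, then there is $r_2\in D$ with $r_2\le r_0$ and $Proj(r_2)\le p_1$.
   Context: $P^{\neq}(\omega_2)$ is the poset of pairs $(p,n)$ where $n\in\omega$ and $p$ is a function with $dom(p)$ a finite subset of $\omega_2$ and $p(\alpha)\in{}^n\omega$ for every $\alpha\in dom(p)$, ordered by $(p_0,n_0)\ge(p_1,n_1)$ ($(p_1,n_1)$ stronger) iff $dom(p_0)\subseteq dom(p_1)$, $n_0\le n_1$, $p_0(\alpha)\subseteq p_1(\alpha)$ for every $\alpha\in dom(p_0)$, and for every $i$ with $n_0\le i<n_1$ and all $\beta\neq\alpha$ in $dom(p_0)$, $p_1(\beta)(i)\neq p_1(\alpha)(i)$. $R$ is the set of functions $r$ with $dom(r)$ a finite subset of $(\omega_2\times 2)\cup\{\omega_2\}$ such that $r(\alpha,0)\in{}^{<\omega}\omega$ whenever $(\alpha,0)\in dom(r)$, $r(\alpha,1)\in\omega$ whenever $(\alpha,1)\in dom(r)$, and (if $\omega_2\in dom(r)$) $r(\omega_2)$ is a finite partial function from ${}^{<\omega}\omega$ to $\omega$ which is one-to-one on each ${}^n\omega$. $R$ is ordered by $r_0\ge r_1$ iff $dom(r_0)\subseteq dom(r_1)$, $r_0(\alpha,0)\subseteq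 r_1(\alpha,0)$, $r_0(\alpha,1)=r_1(\alpha,1)$ and $r_0(\omega_2)\subseteq r_1(\omega_2)$ whenever these are defined for $r_0$. $D$ is the set of $r\in R$ such that $\omega_2\in dom(r)$, there is at least one $\alpha$ with $(\alpha,0)\in dom(r)$, $(\alpha,0)\in dom(r)$ iff $(\alpha,1)\in dom(r)$, and there is $n_r\in\omega$ such that the $r(\alpha,0)$ (for $(\alpha,0)\in dom(r)$) are pairwise distinct elements of ${}^{n_r}\omega$, $r(\alpha,1)\le n_r$, and $dom(r(\omega_2))=\{\sigma\in{}^{<\omega}\omega:\exists\alpha\ \sigma\subseteq r(\alpha,0)\}$. For $r\in D$, $Proj(r)=(p,n_r)$ where $dom(p)=\{\alpha:(\alpha,0)\in dom(r)\}$ and for $\alpha\in dom(p)$ and $n<n_r$: $p(\alpha)(n)=r(\alpha,0)(n)$ if $n<r(\alpha,1)$, and $p(\alpha)(n)=r(\omega_2)(r(\alpha,0)\restriction(n+1))$ if $r(\alpha,1)\le n<n_r$. *)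

theory Defs
  imports Main "HOL-Library.Sublist"
begin

text \<open>The index set omega_2 is represented by a type 'a whose cardinality is
  the second successor cardinal of aleph_0. Finite sequences in omega^{<omega} are
  lists of naturals; omega^n is the set of lists of length n.
  A condition of R is a triple (r0, r1, rt): r0 alpha = r(alpha,0), r1 alpha = r(alpha,1),
  rt = Some f iff omega_2 is in dom r, with r(omega_2) = f.\<close>

definition is_omega2_type :: "'a itself \<Rightarrow> bool" where
  "is_omega2_type _ \<longleftrightarrow>
     (card_of (UNIV :: 'a set), cardSuc (cardSuc (card_of (UNIV :: nat set)))) \<in> ordIso"

type_synonym 'a Pcond = "('a \<rightharpoonup> nat list) \<times> nat"
type_synonym 'a Rcond = "('a \<rightharpoonup> nat list) \<times> ('a \<rightharpoonup> nat) \<times> ((nat list \<rightharpoonup> nat) option)"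

definition Pneq :: "'a Pcond set" where
  "Pneq = {(p, n). finite (dom p) \<and> (\<forall>\<alpha>\<in>dom p. length (the (p \<alpha>)) = n)}"

definition P_le :: "'a Pcond \<Rightarrow> 'a Pcond \<Rightarrow> bool" where
  "P_le q p \<longleftrightarrow> (case p of (p0, n0) \<Rightarrow> case q of (p1, n1) \<Rightarrow>
      dom p0 \<subseteq> dom p1 \<and> n0 \<le> n1 \<and>
      (\<forall>\<alpha>\<in>dom p0. prefix (the (p0 \<alpha>)) (the (p1 \<alpha>))) \<and>
      (\<forall>i. n0 \<le> i \<and> i < n1 \<longrightarrow>
         (\<forall>\<alpha>\<in>dom p0. \<forall>\<beta>\<in>dom p0. \<beta> \<noteq> \<alpha> \<longrightarrow>
            the (p1 \<beta>) ! i \<noteq> the (p1 \<alpha>) ! i)))"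

definition Rset :: "'a Rcond set" where
  "Rset = {(r0, r1, rt). finite (dom r0) \<and> finite (dom r1) \<and>
     (\<forall>f. rt = Some f \<longrightarrow> finite (dom f) \<and>
        (\<forall>\<sigma>\<in>dom f. \<forall>\<tau>\<in>dom f. length \<sigma> = length \<tau> \<and> f \<sigma> = f \<tau> \<longrightarrow> \<sigma> = \<tau>))}"

definition R_le :: "'a Rcond \<Rightarrow> 'a Rcond \<Rightarrow> bool" where
  "R_le s r \<longleftrightarrow> (case r of (r0, r1, rt) \<Rightarrow> case s of (s0, s1, st) \<Rightarrow>
      dom r0 \<subseteq> dom s0 \<and> dom r1 \<subseteq> dom s1 \<and>
      (\<forall>\<alpha>\<in>dom r0. prefix (the (r0 \<alpha>)) (the (s0 \<alpha>))) \<and>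
      (\<forall>\<alpha>\<in>dom r1. r1 \<alpha> = s1 \<alpha>) \<and>
      (\<forall>f. rt = Some f \<longrightarrow> (\<exists>g. st = Some g \<and> f \<subseteq>\<^sub>m g)))"

definition Dset :: "'a Rcond set" where
  "Dset = {(r0, r1, rt). (r0, r1, rt) \<in> Rset \<and> rt \<noteq> None \<and> dom r0 \<noteq> {} \<and>
     dom r0 = dom r1 \<and>
     (\<exists>n. (\<forall>\<alpha>\<in>dom r0. length (the (r0 \<alpha>)) = n \<and> the (r1 \<alpha>) \<le> n) \<and>
          inj_on (\<lambda>\<alpha>. the (r0 \<alpha>)) (dom r0) \<and>
          dom (the rt) = {\<sigma>. \<exists>\<alpha>\<in>dom r0. prefix \<sigma> (the (r0 \<alpha>))})}"

text \<open>n_r: the common length of the r(alpha,0) (well defined for r in D).\<close>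
definition n_of :: "'a Rcond \<Rightarrow> nat" where
  "n_of r = (case r of (r0, r1, rt) \<Rightarrow> length (the (r0 (SOME \<alpha>. \<alpha> \<in> dom r0))))"

definition Proj :: "'a Rcond \<Rightarrow> 'a Pcond" where
  "Proj r = (case r of (r0, r1, rt) \<Rightarrow>
     ((\<lambda>\<alpha>. if \<alpha> \<in> dom r0 then
          Some (map (\<lambda>i. if i < the (r1 \<alpha>) then the (r0 \<alpha>) ! i
                         else the (the rt (take (i + 1) (the (r0 \<alpha>))))) [0..<n_of r])
        else None),
      n_of r))"

end

theory Submission
  imports Defs "HOL-Library.Countable_Set"
begin

(*
  Read Proj r row by row: for r in D the row at alpha is proj_seq (r(alpha,0)) (r(alpha,1)) (r(omega_2)).

  (1) If r1 <= r0 then every ingredient of a row of r0 is extended in r1, so rows extend rows.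
  At a level i >= n_{r0} the rows of distinct alpha, beta in dom r0 are values of r1(omega_2) at the
  nodes r1(alpha,0)|(i+1) and r1(beta,0)|(i+1); these nodes differ, since their restrictions to
  n_{r0} are the distinct r0(alpha,0) and r0(beta,0), and r1(omega_2) is one-to-one on each level.

  (2) Given (q, m) <= Proj r0, lengthen every sequence to m + 1: an old alpha gets r0(alpha,0)
  followed by the entries of q(alpha) beyond n_{r0}, a new alpha gets q(alpha), and each then gets
  an injective code of alpha as last entry, which keeps the sequences distinct.  The new
  r(omega_2) extends r0(omega_2), maps every node of an old sequence at the levels n_{r0}+1 .. m
  to its last entry, so that the row copies q there, and gives fresh values above all others to
  the remaining nodes.  Copying is one-to-one on each level because q separates the old
  coordinates at these levels, and the fresh values at level m make the new rows distinct there.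
*)

lemma prefix_iff_take: "prefix xs ys \<longleftrightarrow> take (length xs) ys = xs"
  by (metis append_eq_conv_conj prefix_def)

lemma prefix_iff_nth:
  "prefix xs ys \<longleftrightarrow> length xs \<le> length ys \<and> (\<forall>i < length xs. xs ! i = ys ! i)"
proof
  assume "prefix xs ys"
  then show "length xs \<le> length ys \<and> (\<forall>i < length xs. xs ! i = ys ! i)"
    by (auto simp: prefix_def nth_append)
next
  assume "length xs \<le> length ys \<and> (\<forall>i < length xs. xs ! i = ys ! i)"
  then have "take (length xs) ys = xs"
    by (intro nth_equalityI) auto
  then show "prefix xs ys"
    by (simp add: prefix_iff_take)
qed

definition inj_on_levels :: "('a list \<rightharpoonup> 'b) \<Rightarrow> bool" where
  "inj_on_levels f \<longleftrightarrow> (\<forall>\<sigma>\<in>dom f. \<forall>\<tau>\<in>dom f. length \<sigma> = length \<tau> \<and> f \<sigma> = f \<tau> \<longrightarrow> \<sigma> = \<tau>)"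

lemma inj_on_levelsD:
  "inj_on_levels f \<Longrightarrow> \<sigma> \<in> dom f \<Longrightarrow> \<tau> \<in> dom f \<Longrightarrow> length \<sigma> = length \<tau> \<Longrightarrow> f \<sigma> = f \<tau> \<Longrightarrow> \<sigma> = \<tau>"
  unfolding inj_on_levels_def by blast

lemma inj_on_levels_map_add:
  assumes "inj_on_levels f" "inj_on_levels g"
    and "\<And>\<sigma> \<tau>. \<sigma> \<in> dom f - dom g \<Longrightarrow> \<tau> \<in> dom g \<Longrightarrow> length \<sigma> = length \<tau> \<Longrightarrow> f \<sigma> \<noteq> g \<tau>"
  shows "inj_on_levels (f ++ g)"
  using assms unfolding inj_on_levels_def
  by (auto simp: map_add_def split: option.splits) (metis domI domIff)+

definition proj_seq :: "nat list \<Rightarrow> nat \<Rightarrow> (nat list \<rightharpoonup> nat) \<Rightarrow> nat list" where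
  "proj_seq s k f = map (\<lambda>i. if i < k then s ! i else the (f (take (i + 1) s))) [0..<length s]"

lemma length_proj_seq [simp]: "length (proj_seq s k f) = length s"
  by (simp add: proj_seq_def)

lemma nth_proj_seq [simp]:
  "i < length s \<Longrightarrow> proj_seq s k f ! i = (if i < k then s ! i else the (f (take (i + 1) s)))"
  by (simp add: proj_seq_def)

lemma proj_seq_prefix:
  assumes "prefix s s'" "f \<subseteq>\<^sub>m g" "\<And>\<sigma>. prefix \<sigma> s \<Longrightarrow> \<sigma> \<in> dom f"
  shows "prefix (proj_seq s k f) (proj_seq s' k g)"
proof -
  have "proj_seq s k f ! i = proj_seq s' k g ! i" if "i < length s" for i
  proof -
    have "take (i + 1) s' = take (i + 1) s"
      using assms(1) that by (metis prefix_iff_take Suc_eq_plus1 Suc_leI min.absorb1 take_take)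
    moreover have "f (take (i + 1) s) = g (take (i + 1) s)"
      using assms(2,3) take_is_prefix by (metis map_le_def)
    ultimately show ?thesis
      using that assms(1) prefix_length_le[OF assms(1)] by (simp add: prefix_iff_nth)
  qed
  then show ?thesis
    using prefix_length_le[OF assms(1)] by (simp add: prefix_iff_nth)
qed

lemma finite_prefix_closure:
  assumes "finite A"
  shows "finite {\<sigma>. \<exists>\<alpha>\<in>A. prefix \<sigma> (s \<alpha>)}"
proof -
  have "{\<sigma>. \<exists>\<alpha>\<in>A. prefix \<sigma> (s \<alpha>)} = (\<Union>\<alpha>\<in>A. set (prefixes (s \<alpha>)))"
    by auto
  with assms show ?thesis
    by simp
qed

lemma n_of_Dset:
  assumes "(a, b, t) \<in> Dset" "\<alpha> \<in> dom a"
  shows "n_of (a, b, t) = length (the (a \<alpha>))"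
proof -
  obtain n where n: "\<forall>\<beta>\<in>dom a. length (the (a \<beta>)) = n"
    using assms(1) unfolding Dset_def by auto
  have "(SOME \<beta>. \<beta> \<in> dom a) \<in> dom a"
    using assms(2) by (rule someI)
  then show ?thesis
    using n assms(2) unfolding n_of_def by simp
qed

lemma Dset_SomeE:
  assumes "r \<in> Dset"
  obtains a b f where "r = (a, b, Some f)"
  using assms unfolding Dset_def by auto

lemma
  assumes "(a, b, Some f) \<in> Dset"
  shows Dset_finite: "finite (dom a)"
    and Dset_nonempty: "dom a \<noteq> {}"
    and Dset_dom_snd: "dom b = dom a"
    and Dset_length: "\<alpha> \<in> dom a \<Longrightarrow> length (the (a \<alpha>)) = n_of (a, b, Some f)"
    and Dset_snd_le: "\<alpha> \<in> dom a \<Longrightarrow> the (b \<alpha>) \<le> n_of (a, b, Some f)"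
    and Dset_inj: "inj_on (\<lambda>\<alpha>. the (a \<alpha>)) (dom a)"
    and Dset_inj_on_levels: "inj_on_levels f"
    and Dset_dom_fun: "dom f = {\<sigma>. \<exists>\<alpha>\<in>dom a. prefix \<sigma> (the (a \<alpha>))}"
  using assms n_of_Dset[OF assms] unfolding Dset_def Rset_def inj_on_levels_def
  by auto (metis domI option.sel)

lemma DsetI:
  assumes "finite (dom a)" "dom a \<noteq> {}" "dom b = dom a"
    and "\<And>\<alpha>. \<alpha> \<in> dom a \<Longrightarrow> length (the (a \<alpha>)) = n"
    and "\<And>\<alpha>. \<alpha> \<in> dom a \<Longrightarrow> the (b \<alpha>) \<le> n"
    and "inj_on (\<lambda>\<alpha>. the (a \<alpha>)) (dom a)" "inj_on_levels f"
    and "dom f = {\<sigma>. \<exists>\<alpha>\<in>dom a. prefix \<sigma> (the (a \<alpha>))}"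
  shows "(a, b, Some f) \<in> Dset"
proof -
  have "finite (dom f)"
    using finite_prefix_closure[OF assms(1)] assms(8) by simp
  with assms show ?thesis
    unfolding Dset_def Rset_def inj_on_levels_def by (auto intro!: exI[of _ n])
qed

lemma Proj_Dset:
  assumes "(a, b, Some f) \<in> Dset"
  shows "Proj (a, b, Some f) =
    ((\<lambda>\<alpha>. Some (proj_seq (the (a \<alpha>)) (the (b \<alpha>)) f)) |` dom a, n_of (a, b, Some f))"
  using Dset_length[OF assms] by (auto simp: Proj_def proj_seq_def restrict_map_def)

lemma
  assumes "(a0, b0, Some f0) \<in> Dset" "R_le (a1, b1, Some f1) (a0, b0, Some f0)"
  shows R_le_dom: "dom a0 \<subseteq> dom a1"
    and R_le_fun: "f0 \<subseteq>\<^sub>m f1"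
    and R_le_fst: "\<alpha> \<in> dom a0 \<Longrightarrow> prefix (the (a0 \<alpha>)) (the (a1 \<alpha>))"
    and R_le_snd: "\<alpha> \<in> dom a0 \<Longrightarrow> b1 \<alpha> = b0 \<alpha>"
  using assms(2) Dset_dom_snd[OF assms(1)] unfolding R_le_def by auto

lemma take_n_of_R_le:
  assumes D0: "(a0, b0, Some f0) \<in> Dset" and le: "R_le (a1, b1, Some f1) (a0, b0, Some f0)"
    and "\<alpha> \<in> dom a0"
  shows "take (n_of (a0, b0, Some f0)) (the (a1 \<alpha>)) = the (a0 \<alpha>)"
  using R_le_fst[OF D0 le \<open>\<alpha> \<in> dom a0\<close>] Dset_length[OF D0 \<open>\<alpha> \<in> dom a0\<close>]
  by (simp add: prefix_iff_take)

lemma n_of_R_le: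
  assumes D0: "(a0, b0, Some f0) \<in> Dset" and D1: "(a1, b1, Some f1) \<in> Dset"
    and le: "R_le (a1, b1, Some f1) (a0, b0, Some f0)"
  shows "n_of (a0, b0, Some f0) \<le> n_of (a1, b1, Some f1)"
proof -
  obtain \<alpha> where "\<alpha> \<in> dom a0"
    using Dset_nonempty[OF D0] by blast
  then show ?thesis
    using R_le_fst[OF D0 le] R_le_dom[OF D0 le] Dset_length[OF D0] Dset_length[OF D1]
    by (metis prefix_length_le subsetD)
qed

lemma proj_seq_R_le_distinct:
  assumes D0: "(a0, b0, Some f0) \<in> Dset" and D1: "(a1, b1, Some f1) \<in> Dset"
    and le: "R_le (a1, b1, Some f1) (a0, b0, Some f0)"
    and i: "n_of (a0, b0, Some f0) \<le> i" "i < n_of (a1, b1, Some f1)"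
    and \<alpha>\<beta>: "\<alpha> \<in> dom a0" "\<beta> \<in> dom a0" "\<beta> \<noteq> \<alpha>"
  shows "proj_seq (the (a1 \<beta>)) (the (b1 \<beta>)) f1 ! i \<noteq> proj_seq (the (a1 \<alpha>)) (the (b1 \<alpha>)) f1 ! i"
proof
  let ?\<sigma> = "take (i + 1) (the (a1 \<alpha>))" and ?\<tau> = "take (i + 1) (the (a1 \<beta>))"
  have len: "length (the (a1 \<gamma>)) = n_of (a1, b1, Some f1)" if "\<gamma> \<in> dom a0" for \<gamma>
    using that R_le_dom[OF D0 le] Dset_length[OF D1] by blast
  have "\<not> i < the (b1 \<gamma>)" if "\<gamma> \<in> dom a0" for \<gamma>
    using Dset_snd_le[OF D0 that] R_le_snd[OF D0 le that] i by simp
  moreover assume "proj_seq (the (a1 \<beta>)) (the (b1 \<beta>)) f1 ! i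
    = proj_seq (the (a1 \<alpha>)) (the (b1 \<alpha>)) f1 ! i"
  ultimately have "the (f1 ?\<tau>) = the (f1 ?\<sigma>)"
    using i \<alpha>\<beta> len by simp
  moreover have "?\<sigma> \<in> dom f1" "?\<tau> \<in> dom f1"
    using \<alpha>\<beta> R_le_dom[OF D0 le] take_is_prefix unfolding Dset_dom_fun[OF D1] by blast+
  moreover have "length ?\<tau> = length ?\<sigma>"
    using i \<alpha>\<beta> len by simp
  ultimately have "?\<tau> = ?\<sigma>"
    by (metis Dset_inj_on_levels[OF D1] inj_on_levelsD domD option.sel)
  then have "take (n_of (a0, b0, Some f0)) ?\<tau> = take (n_of (a0, b0, Some f0)) ?\<sigma>"
    by simp
  then have "the (a0 \<beta>) = the (a0 \<alpha>)"
    using take_n_of_R_le[OF D0 le] i \<alpha>\<beta> by (simp add: min_def)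
  then show False
    using Dset_inj[OF D0] \<alpha>\<beta> by (auto dest: inj_onD)
qed

lemma Proj_mono:
  assumes "r0 \<in> Dset" "r1 \<in> Dset" "R_le r1 r0"
  shows "P_le (Proj r1) (Proj r0)"
proof -
  obtain a0 b0 f0 where r0: "r0 = (a0, b0, Some f0)"
    using assms(1) by (rule Dset_SomeE)
  obtain a1 b1 f1 where r1: "r1 = (a1, b1, Some f1)"
    using assms(2) by (rule Dset_SomeE)
  note D0 = assms(1)[unfolded r0] and D1 = assms(2)[unfolded r1]
    and le = assms(3)[unfolded r0 r1]
  have "prefix (proj_seq (the (a0 \<alpha>)) (the (b0 \<alpha>)) f0) (proj_seq (the (a1 \<alpha>)) (the (b1 \<alpha>)) f1)"
    if "\<alpha> \<in> dom a0" for \<alpha>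
    using proj_seq_prefix[OF R_le_fst[OF D0 le that] R_le_fun[OF D0 le]] R_le_snd[OF D0 le that] that
    by (auto simp: Dset_dom_fun[OF D0])
  then show ?thesis
    using R_le_dom[OF D0 le] n_of_R_le[OF D0 D1 le] proj_seq_R_le_distinct[OF D0 D1 le]
    unfolding r0 r1 Proj_Dset[OF D0] Proj_Dset[OF D1] P_le_def
    by (auto simp: subsetD)
qed

locale Proj_lift =
  fixes a0 :: "'a \<rightharpoonup> nat list" and b0 :: "'a \<rightharpoonup> nat" and f0 :: "nat list \<rightharpoonup> nat"
    and q :: "'a \<rightharpoonup> nat list" and m :: nat
  assumes D0: "(a0, b0, Some f0) \<in> Dset"
    and q_Pneq: "(q, m) \<in> Pneq"
    and q_le: "P_le (q, m) (Proj (a0, b0, Some f0))"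
begin

abbreviation n0 :: nat where
  "n0 \<equiv> n_of (a0, b0, Some f0)"

lemma
  shows dom_a0_subset: "dom a0 \<subseteq> dom q"
    and n0_le: "n0 \<le> m"
    and Proj_prefix_q:
      "\<alpha> \<in> dom a0 \<Longrightarrow> prefix (proj_seq (the (a0 \<alpha>)) (the (b0 \<alpha>)) f0) (the (q \<alpha>))"
    and q_distinct:
      "n0 \<le> i \<Longrightarrow> i < m \<Longrightarrow> \<alpha> \<in> dom a0 \<Longrightarrow> \<beta> \<in> dom a0 \<Longrightarrow> \<alpha> \<noteq> \<beta>
        \<Longrightarrow> the (q \<alpha>) ! i \<noteq> the (q \<beta>) ! i"
  using q_le unfolding Proj_Dset[OF D0] P_le_def by auto

lemma finite_dom_q: "finite (dom q)"
  and length_q: "\<alpha> \<in> dom q \<Longrightarrow> length (the (q \<alpha>)) = m"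
  using q_Pneq unfolding Pneq_def by auto

lemma length_dom_f0: "\<sigma> \<in> dom f0 \<Longrightarrow> length \<sigma> \<le> n0"
  using Dset_length[OF D0] prefix_length_le unfolding Dset_dom_fun[OF D0] by fastforce

definition w :: "'a \<Rightarrow> nat list" where
  "w \<alpha> = (if \<alpha> \<in> dom a0 then the (a0 \<alpha>) @ drop n0 (the (q \<alpha>)) else the (q \<alpha>))
     @ [to_nat_on (dom q) \<alpha>]"

lemma length_w: "\<alpha> \<in> dom q \<Longrightarrow> length (w \<alpha>) = Suc m"
  using Dset_length[OF D0] length_q n0_le by (simp add: w_def)

lemma inj_on_w: "inj_on w (dom q)"
proof (rule inj_on_imageI2)
  show "inj_on (last \<circ> w) (dom q)"
    using to_nat_on_finite[OF finite_dom_q] by (simp add: w_def bij_betw_def comp_def)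
qed

lemma prefix_a0_w: "\<alpha> \<in> dom a0 \<Longrightarrow> prefix (the (a0 \<alpha>)) (w \<alpha>)"
  by (simp add: w_def)

lemma nth_w:
  assumes "\<alpha> \<in> dom q" "i < m" "\<alpha> \<notin> dom a0 \<or> n0 \<le> i"
  shows "w \<alpha> ! i = the (q \<alpha>) ! i"
  using assms Dset_length[OF D0] length_q n0_le by (auto simp: w_def nth_append)

definition nodes :: "nat list set" where
  "nodes = {\<sigma>. \<exists>\<alpha>\<in>dom q. prefix \<sigma> (w \<alpha>)}"

definition copy_nodes :: "nat list set" where
  "copy_nodes = {\<sigma>. \<exists>\<alpha>\<in>dom a0. prefix \<sigma> (w \<alpha>) \<and> n0 < length \<sigma> \<and> length \<sigma> \<le> m}"

definition bound :: nat where
  "bound = Suc (Max (ran f0 \<union> (\<Union>\<alpha>\<in>dom q. set (w \<alpha>))))"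

abbreviation fresh_map :: "nat list \<rightharpoonup> nat" where
  "fresh_map \<equiv> (\<lambda>\<sigma>. Some (bound + to_nat \<sigma>)) |` nodes"

abbreviation copy_map :: "nat list \<rightharpoonup> nat" where
  "copy_map \<equiv> (\<lambda>\<sigma>. Some (last \<sigma>)) |` copy_nodes"

definition G :: "nat list \<rightharpoonup> nat" where
  "G = fresh_map ++ copy_map ++ f0"

(* (A2, B2, Some G) is the condition r2; B2 keeps r0(alpha,1) on the old coordinates, as R_le demands. *)
definition A2 :: "'a \<rightharpoonup> nat list" where
  "A2 = (\<lambda>\<alpha>. Some (w \<alpha>)) |` dom q"

definition B2 :: "'a \<rightharpoonup> nat" where
  "B2 = (\<lambda>_. Some m) |` dom q ++ b0"

lemma ran_f0_less_bound: "f0 \<sigma> = Some x \<Longrightarrow> x < bound"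
  and set_w_less_bound: "\<alpha> \<in> dom q \<Longrightarrow> x \<in> set (w \<alpha>) \<Longrightarrow> x < bound"
proof -
  have "finite (dom f0)"
    using finite_prefix_closure[OF Dset_finite[OF D0]] by (simp add: Dset_dom_fun[OF D0])
  then have "finite (ran f0)"
    by (rule finite_ran)
  then have "finite (ran f0 \<union> (\<Union>\<alpha>\<in>dom q. set (w \<alpha>)))"
    using finite_dom_q by simp
  then show "f0 \<sigma> = Some x \<Longrightarrow> x < bound" "\<alpha> \<in> dom q \<Longrightarrow> x \<in> set (w \<alpha>) \<Longrightarrow> x < bound"
    unfolding bound_def by (auto intro!: le_imp_less_Suc Max_ge ranI)
qed

lemma dom_f0_subset: "dom f0 \<subseteq> nodes"
  using prefix_a0_w dom_a0_subset prefix_order.trans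
  unfolding Dset_dom_fun[OF D0] nodes_def by blast

lemma copy_nodes_subset: "copy_nodes \<subseteq> nodes"
  using dom_a0_subset unfolding copy_nodes_def nodes_def by blast

lemma dom_G: "dom G = nodes"
  using dom_f0_subset copy_nodes_subset by (auto simp: G_def)

lemma f0_le_G: "f0 \<subseteq>\<^sub>m G"
  by (simp add: G_def)

lemma G_copy_nodes:
  assumes "\<sigma> \<in> copy_nodes"
  shows "G \<sigma> = Some (last \<sigma>)"
proof -
  have "\<sigma> \<notin> dom f0"
    using assms length_dom_f0 unfolding copy_nodes_def by fastforce
  with assms show ?thesis
    by (simp add: G_def map_add_dom_app_simps)
qed

lemma G_w:
  assumes "\<alpha> \<in> dom q"
  shows "G (w \<alpha>) = Some (bound + to_nat (w \<alpha>))"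
proof -
  have "w \<alpha> \<notin> dom f0" "w \<alpha> \<notin> copy_nodes"
    using length_dom_f0 length_w[OF assms] n0_le unfolding copy_nodes_def by fastforce+
  moreover have "w \<alpha> \<in> nodes"
    using assms unfolding nodes_def by blast
  ultimately show ?thesis
    by (simp add: G_def map_add_dom_app_simps)
qed

lemma last_copy_node:
  assumes "\<alpha> \<in> dom a0" "prefix \<sigma> (w \<alpha>)" "n0 < length \<sigma>" "length \<sigma> \<le> m"
  shows "last \<sigma> = the (q \<alpha>) ! (length \<sigma> - 1)"
proof -
  have "last \<sigma> = \<sigma> ! (length \<sigma> - 1)"
    using assms(3) by (intro last_conv_nth) auto
  also have "\<dots> = w \<alpha> ! (length \<sigma> - 1)"
    using assms(2,3) by (simp add: prefix_iff_nth)
  also have "\<dots> = the (q \<alpha>) ! (length \<sigma> - 1)"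
    using assms dom_a0_subset by (intro nth_w) auto
  finally show ?thesis .
qed

lemma inj_on_levels_copy_map: "inj_on_levels copy_map"
  unfolding inj_on_levels_def
proof (intro ballI impI)
  fix \<sigma> \<tau>
  assume "\<sigma> \<in> dom copy_map" "\<tau> \<in> dom copy_map" and eq: "length \<sigma> = length \<tau> \<and> copy_map \<sigma> = copy_map \<tau>"
  then have "\<sigma> \<in> copy_nodes" "\<tau> \<in> copy_nodes" "last \<sigma> = last \<tau>"
    by (auto simp: restrict_map_def split: if_splits)
  then obtain \<alpha> \<beta> where \<alpha>: "\<alpha> \<in> dom a0" "prefix \<sigma> (w \<alpha>)" "n0 < length \<sigma>" "length \<sigma> \<le> m"
    and \<beta>: "\<beta> \<in> dom a0" "prefix \<tau> (w \<beta>)" "n0 < length \<tau>" "length \<tau> \<le> m"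
    unfolding copy_nodes_def by blast
  then have "the (q \<alpha>) ! (length \<sigma> - 1) = the (q \<beta>) ! (length \<sigma> - 1)"
    using eq \<open>last \<sigma> = last \<tau>\<close> last_copy_node[OF \<alpha>] last_copy_node[OF \<beta>] by simp
  then have "\<alpha> = \<beta>"
    using q_distinct[OF _ _ \<alpha>(1) \<beta>(1), of "length \<sigma> - 1"] \<alpha>(3,4) by linarith
  moreover have "\<sigma> = take (length \<sigma>) (w \<alpha>)" "\<tau> = take (length \<tau>) (w \<beta>)"
    using \<alpha>(2) \<beta>(2) by (simp_all add: prefix_iff_take)
  ultimately show "\<sigma> = \<tau>"
    using eq by simp
qed

lemma last_copy_node_less_bound:
  assumes "\<tau> \<in> copy_nodes"
  shows "last \<tau> < bound"
proof -
  obtain \<beta> where "\<beta> \<in> dom a0" "prefix \<tau> (w \<beta>)" "\<tau> \<noteq> []"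
    using assms unfolding copy_nodes_def by fastforce
  then have "\<beta> \<in> dom q" "last \<tau> \<in> set (w \<beta>)"
    using dom_a0_subset set_mono_prefix last_in_set by blast+
  then show ?thesis
    by (rule set_w_less_bound)
qed

lemma inj_on_levels_G: "inj_on_levels G"
  unfolding G_def
proof (intro inj_on_levels_map_add)
  show "inj_on_levels fresh_map"
    by (simp add: inj_on_levels_def)
  show "inj_on_levels copy_map"
    by (rule inj_on_levels_copy_map)
  show "inj_on_levels f0"
    by (rule Dset_inj_on_levels[OF D0])
  show "fresh_map \<sigma> \<noteq> copy_map \<tau>"
    if "\<sigma> \<in> dom fresh_map - dom copy_map" "\<tau> \<in> dom copy_map" for \<sigma> \<tau>
    using that last_copy_node_less_bound[of \<tau>] by simp
  show "(fresh_map ++ copy_map) \<sigma> \<noteq> f0 \<tau>"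
    if \<sigma>: "\<sigma> \<in> dom (fresh_map ++ copy_map) - dom f0"
      and \<tau>: "\<tau> \<in> dom f0" and "length \<sigma> = length \<tau>" for \<sigma> \<tau>
  proof -
    have "\<sigma> \<notin> copy_nodes"
      using \<tau> \<open>length \<sigma> = length \<tau>\<close> length_dom_f0 unfolding copy_nodes_def by fastforce
    moreover have "\<sigma> \<in> nodes"
      using \<sigma> \<open>\<sigma> \<notin> copy_nodes\<close> by auto
    moreover obtain x where "f0 \<tau> = Some x"
      using \<tau> by blast
    ultimately show ?thesis
      using ran_f0_less_bound by (force simp: map_add_dom_app_simps)
  qed
qed

lemma dom_A2: "dom A2 = dom q"
  and the_A2: "\<alpha> \<in> dom q \<Longrightarrow> the (A2 \<alpha>) = w \<alpha>"
  by (auto simp: A2_def)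

lemma dom_B2: "dom B2 = dom q"
  using Dset_dom_snd[OF D0] dom_a0_subset by (auto simp: B2_def)

lemma B2_old: "\<alpha> \<in> dom a0 \<Longrightarrow> B2 \<alpha> = b0 \<alpha>"
  and B2_new: "\<alpha> \<in> dom q \<Longrightarrow> \<alpha> \<notin> dom a0 \<Longrightarrow> B2 \<alpha> = Some m"
  using Dset_dom_snd[OF D0] by (auto simp: B2_def map_add_dom_app_simps)

lemma the_B2_le: "\<alpha> \<in> dom q \<Longrightarrow> the (B2 \<alpha>) \<le> m"
  using B2_old B2_new Dset_snd_le[OF D0] n0_le by (metis le_trans order_refl option.sel)

lemma lift_in_Dset: "(A2, B2, Some G) \<in> Dset"
proof (rule DsetI)
  show "finite (dom A2)" "dom A2 \<noteq> {}" "dom B2 = dom A2"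
    using finite_dom_q Dset_nonempty[OF D0] dom_a0_subset by (auto simp: dom_A2 dom_B2)
  show "length (the (A2 \<alpha>)) = Suc m" "the (B2 \<alpha>) \<le> Suc m" if "\<alpha> \<in> dom A2" for \<alpha>
    using that the_B2_le length_w by (simp_all add: dom_A2 the_A2 le_SucI)
  show "inj_on (\<lambda>\<alpha>. the (A2 \<alpha>)) (dom A2)"
    using inj_on_w unfolding dom_A2 by (rule inj_on_cong[THEN iffD1, rotated]) (simp add: the_A2)
  show "inj_on_levels G"
    by (rule inj_on_levels_G)
  show "dom G = {\<sigma>. \<exists>\<alpha>\<in>dom A2. prefix \<sigma> (the (A2 \<alpha>))}"
    by (simp add: dom_G nodes_def dom_A2 the_A2)
qed

lemma lift_le_r0: "R_le (A2, B2, Some G) (a0, b0, Some f0)"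
  using dom_a0_subset Dset_dom_snd[OF D0] prefix_a0_w B2_old f0_le_G
  unfolding R_le_def by (auto simp: dom_A2 dom_B2 the_A2 subsetD)

lemma G_take_w:
  assumes "\<alpha> \<in> dom a0" "n0 \<le> i" "i < m"
  shows "G (take (i + 1) (w \<alpha>)) = Some (the (q \<alpha>) ! i)"
proof -
  have "length (w \<alpha>) = Suc m"
    using assms(1) dom_a0_subset length_w by blast
  then have "take (i + 1) (w \<alpha>) \<in> copy_nodes"
    using assms take_is_prefix unfolding copy_nodes_def by fastforce
  moreover have "last (take (i + 1) (w \<alpha>)) = the (q \<alpha>) ! i"
    using assms \<open>length (w \<alpha>) = Suc m\<close> by (subst last_copy_node) (auto simp: take_is_prefix)
  ultimately show ?thesis
    by (simp add: G_copy_nodes)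
qed

lemma proj_seq_w:
  assumes "\<alpha> \<in> dom q"
  shows "proj_seq (w \<alpha>) (the (B2 \<alpha>)) G = the (q \<alpha>) @ [bound + to_nat (w \<alpha>)]"
proof (rule nth_equalityI)
  show "length (proj_seq (w \<alpha>) (the (B2 \<alpha>)) G) = length (the (q \<alpha>) @ [bound + to_nat (w \<alpha>)])"
    using assms length_w length_q by simp
  fix i
  assume "i < length (proj_seq (w \<alpha>) (the (B2 \<alpha>)) G)"
  then have "i < Suc m"
    using assms length_w by simp
  then consider "i = m" | "i < m" "\<alpha> \<notin> dom a0" | "i < n0" "\<alpha> \<in> dom a0"
    | "n0 \<le> i" "i < m" "\<alpha> \<in> dom a0"
    by linarith
  then show "proj_seq (w \<alpha>) (the (B2 \<alpha>)) G ! i = (the (q \<alpha>) @ [bound + to_nat (w \<alpha>)]) ! i"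
  proof cases
    case 1
    then show ?thesis
      using assms the_B2_le[OF assms] length_w[OF assms] length_q[OF assms] G_w[OF assms]
      by (simp add: not_less nth_append)
  next
    case 2
    then show ?thesis
      using assms length_w length_q B2_new nth_w by (simp add: nth_append)
  next
    case 3
    have "prefix (proj_seq (the (a0 \<alpha>)) (the (b0 \<alpha>)) f0) (proj_seq (w \<alpha>) (the (b0 \<alpha>)) G)"
      using 3(2) by (intro proj_seq_prefix prefix_a0_w f0_le_G) (auto simp: Dset_dom_fun[OF D0])
    with Proj_prefix_q[OF 3(2)] 3 Dset_length[OF D0] B2_old length_q[OF assms] n0_le show ?thesis
      by (simp add: prefix_iff_nth nth_append)
  next
    case 4
    have "\<not> i < the (B2 \<alpha>)"
      using 4 B2_old Dset_snd_le[OF D0, of \<alpha>] by simp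
    then show ?thesis
      using 4 length_w[OF assms] length_q[OF assms] G_take_w by (simp add: nth_append)
  qed
qed

lemma Proj_lift_le_q: "P_le (Proj (A2, B2, Some G)) (q, m)"
proof -
  have "n_of (A2, B2, Some G) = Suc m"
    using Dset_nonempty[OF D0] dom_a0_subset
    by (metis ex_in_conv subsetD n_of_Dset[OF lift_in_Dset] dom_A2 the_A2 length_w)
  then show ?thesis
    using inj_on_w
    by (auto simp: Proj_Dset[OF lift_in_Dset] P_le_def dom_A2 the_A2 proj_seq_w
        prefix_iff_nth nth_append length_q inj_on_eq_iff)
qed

end

lemma Proj_lift_exists:
  assumes "r0 \<in> Dset" "p1 \<in> Pneq" "P_le p1 (Proj r0)"
  shows "\<exists>r2\<in>Dset. R_le r2 r0 \<and> P_le (Proj r2) p1"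
proof -
  obtain a0 b0 f0 where r0: "r0 = (a0, b0, Some f0)"
    using assms(1) by (rule Dset_SomeE)
  obtain q m where p1: "p1 = (q, m)"
    by fastforce
  interpret Proj_lift a0 b0 f0 q m
    using assms unfolding r0 p1 by unfold_locales
  show ?thesis
    using lift_in_Dset lift_le_r0 Proj_lift_le_q unfolding r0 p1 by blast
qed

theorem claim3:
  assumes "is_omega2_type TYPE('a)"
  shows "(\<forall>r0 r1 :: 'a Rcond. r0 \<in> Dset \<and> r1 \<in> Dset \<and> R_le r1 r0 \<longrightarrow>
            P_le (Proj r1) (Proj r0))
       \<and> (\<forall>(r0 :: 'a Rcond) p1. r0 \<in> Dset \<and> p1 \<in> Pneq \<and> P_le p1 (Proj r0) \<longrightarrow>
            (\<exists>r2\<in>Dset. R_le r2 r0 \<and> P_le (Proj r2) p1))"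
  \<comment> \<open>the cardinality of the index type plays no role\<close>
  using Proj_mono Proj_lift_exists by blast

end
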